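(* Let $\mathfrak H$ be a P-module. There exist $n\geq 1$, irreducible sub-modules $\mathfrak H_i\subset\mathfrak H$ for $1\leq i\leq n$, and a vector subspace $\mathfrak H_{\mathrm{res}}\subset\mathfrak H$ containing no non-zero sub-module, such that $\mathfrak H=\left(\bigoplus_{i=1}^n\mathfrak H_i\right)\oplus\mathfrak H_{\mathrm{res}}$ (orthogonal direct sum).
   Context: A Pythagorean module (P-module) is a triple $(A,B,\mathfrak H)$ where $\mathfrak H$ is a finite-dimensional complex Hilbert space and $A,B$ are linear operators on $\mathfrak H$ with $A^*A+B^*B=\mathrm{id}_{\mathfrak H}$. A sub-module is a subspace $\mathfrak K\subset\mathfrak H$ with $A\mathfrak K\subset\mathfrak K$ and $B\mathfrak K\subset\mathfrak K$ (no invariance under $A^*,B^*$ is required), equipped with the restrictions of $A,B$. A P-module is irreducible if it has no sub-module other than $\{0\}$ and itself. *)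

theory Defs
  imports "HOL-Analysis.Analysis"
begin

text \<open>A finite-dimensional complex Hilbert space is modelled (up to unitary
isomorphism) as complex^'d with the standard inner product; operators are
matrices acting by *v.\<close>

definition cinner :: "complex^'d \<Rightarrow> complex^'d \<Rightarrow> complex" where
  "cinner x y = (\<Sum>i\<in>UNIV. x$i * cnj (y$i))"

definition adjoint_mat :: "complex^'d^'d \<Rightarrow> complex^'d^'d" where
  "adjoint_mat M = (\<chi> i j. cnj (M$j$i))"

definition P_module :: "complex^'d^'d \<Rightarrow> complex^'d^'d \<Rightarrow> bool" where
  "P_module A B \<longleftrightarrow> adjoint_mat A ** A + adjoint_mat B ** B = mat 1"

definition csubspace :: "(complex^'d) set \<Rightarrow> bool" where
  "csubspace S \<longleftrightarrow> 0 \<in> S \<and> (\<forall>x\<in>S. \<forall>y\<in>S. x + y \<in> S) \<and> (\<forall>c. \<forall>x\<in>S. c *s x \<in> S)"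

definition submodule :: "complex^'d^'d \<Rightarrow> complex^'d^'d \<Rightarrow> (complex^'d) set \<Rightarrow> bool" where
  "submodule A B K \<longleftrightarrow> csubspace K \<and> (\<forall>x\<in>K. A *v x \<in> K) \<and> (\<forall>x\<in>K. B *v x \<in> K)"

definition irreducible_submodule :: "complex^'d^'d \<Rightarrow> complex^'d^'d \<Rightarrow> (complex^'d) set \<Rightarrow> bool" where
  "irreducible_submodule A B K \<longleftrightarrow> submodule A B K \<and> K \<noteq> {0} \<and>
     (\<forall>L. submodule A B L \<and> L \<subseteq> K \<longrightarrow> L = {0} \<or> L = K)"

definition orth :: "(complex^'d) set \<Rightarrow> (complex^'d) set \<Rightarrow> bool" where
  "orth S T \<longleftrightarrow> (\<forall>x\<in>S. \<forall>y\<in>T. cinner x y = 0)"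

end

theory Submission
  imports Defs
begin

text \<open>Every nonzero sub-module contains an irreducible one, namely a nonzero sub-module of
minimal dimension inside it. Given a subspace W, split off an irreducible sub-module
H \<subseteq> W and recurse on the orthogonal complement of H in W, which has smaller dimension;
once W contains no nonzero sub-module it is the residual part. Since the whole space is a
nonzero sub-module, at least one irreducible summand occurs.\<close>

lemma Re_cinner: "Re (cinner x y) = inner x y"
  unfolding cinner_def inner_vec_def inner_complex_def by simp

lemma cinner_self_eq_0_iff: "cinner x x = 0 \<longleftrightarrow> x = 0"
proof
  show "cinner x x = 0 \<Longrightarrow> x = 0"
    using Re_cinner[of x x, symmetric] by simp
qed (simp add: cinner_def)

lemma cinner_commute: "cinner y x = cnj (cinner x y)"
  unfolding cinner_def by (simp add: mult.commute)

lemma cinner_zero_left: "cinner 0 z = 0"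
  unfolding cinner_def by simp

lemma cinner_add_left: "cinner (x + y) z = cinner x z + cinner y z"
  unfolding cinner_def by (simp add: sum.distrib algebra_simps)

lemma cinner_scale_left: "cinner (c *s x) z = c * cinner x z"
  unfolding cinner_def by (simp add: sum_distrib_left algebra_simps)

lemma cinner_scale_right: "cinner z (c *s x) = cnj c * cinner z x"
  unfolding cinner_def by (simp add: sum_distrib_left algebra_simps)

lemma orth_commute: "orth S T \<Longrightarrow> orth T S"
  unfolding orth_def by (metis cinner_commute complex_cnj_zero)

lemma csubspace_UNIV: "csubspace UNIV"
  unfolding csubspace_def by simp

lemma scaleR_eq_scalar_mult_of_real: "c *\<^sub>R (x :: complex^'d) = complex_of_real c *s x"
  by (simp add: vec_eq_iff) (simp add: scaleR_conv_of_real)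

lemma csubspace_imp_subspace: "csubspace S \<Longrightarrow> subspace S"
  unfolding csubspace_def subspace_def by (simp add: scaleR_eq_scalar_mult_of_real)

lemma csubspace_diff: "csubspace S \<Longrightarrow> x \<in> S \<Longrightarrow> y \<in> S \<Longrightarrow> x - y \<in> S"
  using subspace_diff csubspace_imp_subspace by blast

lemma dim_less_if_psubset_csubspace:
  "csubspace S \<Longrightarrow> csubspace T \<Longrightarrow> S \<subset> T \<Longrightarrow> dim S < dim T"
  by (metis csubspace_imp_subspace dim_psubset span_eq_iff)

text \<open>The real orthogonal projection onto a complex subspace H is already orthogonal for
cinner: if x - h is real-orthogonal to both y and i*y, then cinner (x - h) y has zero real
and imaginary part.\<close>

lemma csubspace_orthogonal_projection:
  assumes "csubspace H"
  obtains h where "h \<in> H" and "\<And>y. y \<in> H \<Longrightarrow> cinner (x - h) y = 0"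
proof -
  have span_H: "span H = H"
    using assms csubspace_imp_subspace span_eq_iff by blast
  obtain h z where "h \<in> span H" and z_orth: "\<And>w. w \<in> span H \<Longrightarrow> orthogonal z w"
    and "x = h + z"
    using orthogonal_subspace_decomp_exists by blast
  have "cinner z y = 0" if "y \<in> H" for y
  proof -
    have "\<i> *s y \<in> H"
      using assms that unfolding csubspace_def by blast
    then have "Re (cinner z y) = 0" and "Re (cinner z (\<i> *s y)) = 0"
      using z_orth that span_H by (auto simp: orthogonal_def Re_cinner)
    then show ?thesis
      by (simp add: cinner_scale_right complex_eq_iff)
  qed
  then show ?thesis
    using that \<open>h \<in> span H\<close> \<open>x = h + z\<close> span_H by simp
qed

lemma submodule_contains_irreducible:
  assumes "submodule A B K" and "K \<noteq> {0}"
  obtains H where "irreducible_submodule A B H" and "H \<subseteq> K"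
proof -
  let ?nonzero_sub = "\<lambda>H. submodule A B H \<and> H \<noteq> {0} \<and> H \<subseteq> K"
  obtain H where H: "?nonzero_sub H" and minimal: "\<And>L. ?nonzero_sub L \<Longrightarrow> dim H \<le> dim L"
    using ex_has_least_nat[of ?nonzero_sub K dim] assms by blast
  have "irreducible_submodule A B H"
    unfolding irreducible_submodule_def
  proof (intro conjI allI impI)
    fix L assume L: "submodule A B L \<and> L \<subseteq> H"
    show "L = {0} \<or> L = H"
    proof (rule ccontr)
      assume "\<not> (L = {0} \<or> L = H)"
      then have "dim L < dim H"
        using L H dim_less_if_psubset_csubspace unfolding submodule_def by blast
      moreover have "dim H \<le> dim L"
        using minimal L H \<open>\<not> (L = {0} \<or> L = H)\<close> by blast
      ultimately show False by simp
    qed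
  qed (use H in auto)
  then show ?thesis
    using that H by blast
qed

lemma irreducible_submodule_csubspace: "irreducible_submodule A B H \<Longrightarrow> csubspace H"
  unfolding irreducible_submodule_def submodule_def by blast

definition orth_compl_in :: "(complex^'d) set \<Rightarrow> (complex^'d) set \<Rightarrow> (complex^'d) set" where
  "orth_compl_in W H = {x \<in> W. \<forall>h\<in>H. cinner x h = 0}"

lemma orth_compl_in_subset: "orth_compl_in W H \<subseteq> W"
  unfolding orth_compl_in_def by blast

lemma orth_subset_orth_compl_in: "S \<subseteq> orth_compl_in W H \<Longrightarrow> orth S H"
  unfolding orth_def orth_compl_in_def by blast

lemma orth_subset_orth_compl_in': "S \<subseteq> orth_compl_in W H \<Longrightarrow> orth H S"
  using orth_subset_orth_compl_in orth_commute by blast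

lemma csubspace_orth_compl_in: "csubspace W \<Longrightarrow> csubspace (orth_compl_in W H)"
  unfolding csubspace_def orth_compl_in_def
  by (auto simp: cinner_add_left cinner_scale_left cinner_zero_left)

lemma orth_compl_in_split:
  assumes "csubspace W" "csubspace H" "H \<subseteq> W" "x \<in> W"
  obtains h where "h \<in> H" and "x - h \<in> orth_compl_in W H"
proof -
  obtain h where "h \<in> H" and "\<And>y. y \<in> H \<Longrightarrow> cinner (x - h) y = 0"
    using csubspace_orthogonal_projection[OF \<open>csubspace H\<close>] by blast
  moreover have "x - h \<in> W"
    using assms \<open>h \<in> H\<close> csubspace_diff by blast
  ultimately show ?thesis
    using that unfolding orth_compl_in_def by blast
qed

lemma dim_orth_compl_in_less:
  assumes "csubspace W" "csubspace H" "H \<subseteq> W" "H \<noteq> {0}"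
  shows "dim (orth_compl_in W H) < dim W"
proof -
  obtain h where "h \<in> H" "h \<noteq> 0"
    using assms(2,4) unfolding csubspace_def by blast
  then have "h \<in> W - orth_compl_in W H"
    using assms(3) cinner_self_eq_0_iff unfolding orth_compl_in_def by blast
  then have "orth_compl_in W H \<subset> W"
    using orth_compl_in_subset by blast
  then show ?thesis
    using assms(1) csubspace_orth_compl_in dim_less_if_psubset_csubspace by blast
qed

definition irreducible_decomposition ::
    "complex^'d^'d \<Rightarrow> complex^'d^'d \<Rightarrow> (complex^'d) set \<Rightarrow> nat \<Rightarrow> (nat \<Rightarrow> (complex^'d) set)
      \<Rightarrow> (complex^'d) set \<Rightarrow> bool" where
  "irreducible_decomposition A B W n Hs Hres \<longleftrightarrow>
     (\<forall>i\<in>{1..n}. irreducible_submodule A B (Hs i) \<and> Hs i \<subseteq> W) \<and>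
     csubspace Hres \<and> Hres \<subseteq> W \<and>
     (\<forall>K. submodule A B K \<and> K \<subseteq> Hres \<longrightarrow> K = {0}) \<and>
     (\<forall>i\<in>{1..n}. \<forall>j\<in>{1..n}. i \<noteq> j \<longrightarrow> orth (Hs i) (Hs j)) \<and>
     (\<forall>i\<in>{1..n}. orth (Hs i) Hres) \<and>
     (\<forall>x\<in>W. \<exists>v r. (\<forall>i\<in>{1..n}. v i \<in> Hs i) \<and> r \<in> Hres \<and> x = (\<Sum>i=1..n. v i) + r)"

lemma irreducible_decomposition_residual:
  assumes "csubspace W" and "\<And>K. submodule A B K \<Longrightarrow> K \<subseteq> W \<Longrightarrow> K = {0}"
  shows "irreducible_decomposition A B W 0 Hs W"
  using assms unfolding irreducible_decomposition_def by auto

lemma irreducible_decomposition_insert: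
  assumes W: "csubspace W"
    and H: "irreducible_submodule A B H" "H \<subseteq> W"
    and dec: "irreducible_decomposition A B (orth_compl_in W H) n Hs Hres"
  shows "irreducible_decomposition A B W (Suc n) (Hs(Suc n := H)) Hres"
proof -
  let ?W' = "orth_compl_in W H"
  have in_W': "\<forall>i\<in>{1..n}. Hs i \<subseteq> ?W'" "Hres \<subseteq> ?W'"
    using dec unfolding irreducible_decomposition_def by auto
  have split: "\<exists>v r. (\<forall>i\<in>{1..Suc n}. v i \<in> (Hs(Suc n := H)) i) \<and> r \<in> Hres \<and>
      x = (\<Sum>i=1..Suc n. v i) + r" if "x \<in> W" for x
  proof -
    obtain h where "h \<in> H" and "x - h \<in> ?W'"
      using orth_compl_in_split[OF W irreducible_submodule_csubspace[OF H(1)] H(2) \<open>x \<in> W\<close>] .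
    then obtain v r where "\<forall>i\<in>{1..n}. v i \<in> Hs i" and "r \<in> Hres"
      and "x - h = (\<Sum>i=1..n. v i) + r"
      using dec unfolding irreducible_decomposition_def by blast
    moreover have "(\<Sum>i=1..n. (v(Suc n := h)) i) = (\<Sum>i=1..n. v i)"
      by (rule sum.cong) auto
    ultimately show ?thesis
      using \<open>h \<in> H\<close> by (intro exI[of _ "v(Suc n := h)"] exI[of _ r]) (auto simp: algebra_simps)
  qed
  have "\<forall>i\<in>{1..Suc n}.
      irreducible_submodule A B ((Hs(Suc n := H)) i) \<and> (Hs(Suc n := H)) i \<subseteq> W"
    using dec H orth_compl_in_subset[of W H]
    unfolding irreducible_decomposition_def by (auto simp: atLeastAtMostSuc_conv)
  moreover have "\<forall>i\<in>{1..Suc n}. \<forall>j\<in>{1..Suc n}.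
      i \<noteq> j \<longrightarrow> orth ((Hs(Suc n := H)) i) ((Hs(Suc n := H)) j)"
    using dec in_W' orth_subset_orth_compl_in[of _ W H] orth_subset_orth_compl_in'[of _ W H]
    unfolding irreducible_decomposition_def by (auto simp: atLeastAtMostSuc_conv)
  moreover have "\<forall>i\<in>{1..Suc n}. orth ((Hs(Suc n := H)) i) Hres"
    using dec in_W' orth_subset_orth_compl_in'[of _ W H]
    unfolding irreducible_decomposition_def by (auto simp: atLeastAtMostSuc_conv)
  moreover have "Hres \<subseteq> W"
    using in_W' orth_compl_in_subset by blast
  ultimately show ?thesis
    using dec split unfolding irreducible_decomposition_def by (intro conjI) simp_all
qed

lemma irreducible_decomposition_exists:
  assumes "csubspace W"
  shows "\<exists>n Hs Hres. irreducible_decomposition A B W n Hs Hres"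
  using assms
proof (induction "dim W" arbitrary: W rule: less_induct)
  case less
  show ?case
  proof (cases "\<exists>K. submodule A B K \<and> K \<subseteq> W \<and> K \<noteq> {0}")
    case True
    then obtain H where H: "irreducible_submodule A B H" "H \<subseteq> W"
      using submodule_contains_irreducible by (metis subset_trans)
    have "dim (orth_compl_in W H) < dim W"
      using dim_orth_compl_in_less[OF less.prems irreducible_submodule_csubspace[OF H(1)] H(2)] H(1)
      unfolding irreducible_submodule_def by blast
    then obtain n Hs Hres where "irreducible_decomposition A B (orth_compl_in W H) n Hs Hres"
      using less.hyps[OF _ csubspace_orth_compl_in[OF less.prems]] by blast
    then show ?thesis
      using irreducible_decomposition_insert[OF less.prems H] by blast
  next
    case False
    then show ?thesis
      using irreducible_decomposition_residual less.prems by blast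
  qed
qed

theorem lemma2p1:
  fixes A B :: "complex^'d^'d"
  assumes "P_module A B"
  shows "\<exists>n::nat. n \<ge> 1 \<and> (\<exists>Hs :: nat \<Rightarrow> (complex^'d) set. \<exists>Hres.
           (\<forall>i\<in>{1..n}. irreducible_submodule A B (Hs i)) \<and>
           csubspace Hres \<and>
           (\<forall>K. submodule A B K \<and> K \<subseteq> Hres \<longrightarrow> K = {0}) \<and>
           (\<forall>i\<in>{1..n}. \<forall>j\<in>{1..n}. i \<noteq> j \<longrightarrow> orth (Hs i) (Hs j)) \<and>
           (\<forall>i\<in>{1..n}. orth (Hs i) Hres) \<and>
           (\<forall>x. \<exists>v r. (\<forall>i\<in>{1..n}. v i \<in> Hs i) \<and> r \<in> Hres \<and> x = (\<Sum>i=1..n. v i) + r))"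
proof -
  obtain n Hs Hres where dec: "irreducible_decomposition A B UNIV n Hs Hres"
    using irreducible_decomposition_exists csubspace_UNIV by blast
  have "n \<noteq> 0"
  proof
    assume "n = 0"
    then have "Hres = UNIV"
      using dec unfolding irreducible_decomposition_def by auto
    moreover have "submodule A B UNIV"
      unfolding submodule_def using csubspace_UNIV by simp
    moreover have "(vec 1 :: complex^'d) \<noteq> 0"
      by (simp add: vec_eq_iff)
    ultimately show False
      using dec unfolding irreducible_decomposition_def by blast
  qed
  then show ?thesis
    using dec unfolding irreducible_decomposition_def by (intro exI[of _ n]) auto
qed

end
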